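(* Let $A=B[x;\alpha,\delta]_p$ be a Poisson polynomial algebra over a field $k$ of characteristic zero, with $\delta$ locally nilpotent and $\alpha\delta=\delta(\alpha+s)$ for some $s\in k^\times$. Then the map $\theta:B\to B[x^{\pm1}]$, $\theta(b)=\sum_{n\ge0}\frac{1}{n!}\left(\frac{-1}{s}\right)^n\delta^n(b)x^{-n}$, is a Poisson homomorphism from $B$ to $B[x^{\pm1};\alpha,\delta]_p$.
   Context: If $B$ is a Poisson algebra, $\alpha$ a Poisson derivation of $B$ and $\delta$ a derivation of $B$ with $\delta(\{a,b\})=\{\delta(a),b\}+\{a,\delta(b)\}+\alpha(a)\delta(b)-\delta(a)\alpha(b)$ for $a,b\in B$, then $B[x;\alpha,\delta]_p$ is $B[x]$ with the unique Poisson bracket extending that of $B$ with $\{x,b\}=\alpha(b)x+\delta(b)$, and $B[x^{\pm1};\alpha,\delta]_p$ is the unique extension of this Poisson structure to $B[x^{\pm1}]$. A Poisson homomorphism is a $k$-algebra homomorphism preserving brackets. *)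

theory Defs
  imports "HOL-Computational_Algebra.Formal_Laurent_Series"
begin

text \<open>A commutative k-algebra B is a type 'b of class comm_ring_1 together with a
 ring homomorphism phi from 'k to 'b (the structure map); scalar multiplication
 by c is multiplication by phi c.  The Laurent polynomial ring B[x^{+-1}] is the
 subring of finitely supported elements of the formal Laurent series ring 'b fls,
 with x = fls_X.\<close>

definition alg_map :: "('k::field \<Rightarrow> 'b::comm_ring_1) \<Rightarrow> bool" where
  "alg_map \<phi> \<longleftrightarrow> \<phi> 1 = 1 \<and> (\<forall>c d. \<phi> (c + d) = \<phi> c + \<phi> d) \<and> (\<forall>c d. \<phi> (c * d) = \<phi> c * \<phi> d)"

definition poisson_bracket_on ::
  "('k::field \<Rightarrow> 'b::comm_ring_1) \<Rightarrow> 'b set \<Rightarrow> ('b \<Rightarrow> 'b \<Rightarrow> 'b) \<Rightarrow> bool" where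
  "poisson_bracket_on \<phi> S P \<longleftrightarrow>
     (\<forall>a\<in>S. \<forall>b\<in>S. P a b \<in> S) \<and>
     (\<forall>a\<in>S. \<forall>b\<in>S. P a b = - P b a) \<and>
     (\<forall>a\<in>S. \<forall>b\<in>S. \<forall>c\<in>S. P (a + b) c = P a c + P b c) \<and>
     (\<forall>c. \<forall>a\<in>S. \<forall>b\<in>S. P (\<phi> c * a) b = \<phi> c * P a b) \<and>
     (\<forall>a\<in>S. \<forall>b\<in>S. \<forall>c\<in>S. P a (P b c) + P b (P c a) + P c (P a b) = 0) \<and>
     (\<forall>a\<in>S. \<forall>b\<in>S. \<forall>c\<in>S. P a (b * c) = P a b * c + b * P a c)"

definition derivation :: "('k::field \<Rightarrow> 'b::comm_ring_1) \<Rightarrow> ('b \<Rightarrow> 'b) \<Rightarrow> bool" where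
  "derivation \<phi> D \<longleftrightarrow>
     (\<forall>a b. D (a + b) = D a + D b) \<and> (\<forall>c a. D (\<phi> c * a) = \<phi> c * D a) \<and>
     (\<forall>a b. D (a * b) = D a * b + a * D b)"

definition poisson_derivation ::
  "('k::field \<Rightarrow> 'b::comm_ring_1) \<Rightarrow> ('b \<Rightarrow> 'b \<Rightarrow> 'b) \<Rightarrow> ('b \<Rightarrow> 'b) \<Rightarrow> bool" where
  "poisson_derivation \<phi> P D \<longleftrightarrow> derivation \<phi> D \<and> (\<forall>a b. D (P a b) = P (D a) b + P a (D b))"

definition locally_nilpotent :: "('b::zero \<Rightarrow> 'b) \<Rightarrow> bool" where
  "locally_nilpotent D \<longleftrightarrow> (\<forall>b. \<exists>n. (D ^^ n) b = 0)"

definition laurent_polys :: "'b::zero fls set" where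
  "laurent_polys = {f. finite {n. fls_nth f n \<noteq> 0}}"

text \<open>theta b = sum_{n>=0} (1/n!) (-1/s)^n delta^n(b) x^{-n}; the sum is finite
 by local nilpotency, and is taken up to the first n with delta^n(b) = 0.\<close>
definition theta :: "('k::field_char_0 \<Rightarrow> 'b::comm_ring_1) \<Rightarrow> ('b \<Rightarrow> 'b) \<Rightarrow> 'k \<Rightarrow> 'b \<Rightarrow> 'b fls" where
  "theta \<phi> \<delta> s b =
     (\<Sum>n < (LEAST m. (\<delta> ^^ m) b = 0).
        fls_const (\<phi> ((1 / fact n) * (- 1 / s) ^ n) * (\<delta> ^^ n) b) * fls_X_inv ^ n)"

definition poisson_hom ::
  "('k::field \<Rightarrow> 'a::comm_ring_1) \<Rightarrow> ('k \<Rightarrow> 'b::comm_ring_1) \<Rightarrow> 'a set \<Rightarrow> 'b set \<Rightarrow>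
   ('a \<Rightarrow> 'a \<Rightarrow> 'a) \<Rightarrow> ('b \<Rightarrow> 'b \<Rightarrow> 'b) \<Rightarrow> ('a \<Rightarrow> 'b) \<Rightarrow> bool" where
  "poisson_hom \<phi> \<psi> S T P Q f \<longleftrightarrow>
     (\<forall>a\<in>S. f a \<in> T) \<and> f 1 = 1 \<and>
     (\<forall>a\<in>S. \<forall>b\<in>S. f (a + b) = f a + f b) \<and>
     (\<forall>a\<in>S. \<forall>b\<in>S. f (a * b) = f a * f b) \<and>
     (\<forall>c. \<forall>a\<in>S. f (\<phi> c * a) = \<psi> c * f a) \<and>
     (\<forall>a\<in>S. \<forall>b\<in>S. f (P a b) = Q (f a) (f b))"

end

theory Submission
  imports Defs
begin

text \<open>Write y = x^-1 and k_n = (-1/s)^n / n!, so that theta(b) = sum_n k_n delta^n(b) y^n,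
  a finite sum by local nilpotency. Since k_i k_(m-i) = (m choose i) k_m, multiplicativity of
  theta is the Leibniz rule for delta^m. For brackets, {b, y} = (alpha(b) + delta(b) y) y, so the
  bracket of two such series is the termwise convolution of {-,-} plus terms weighted by
  n k_n = (-1/s) k_(n-1); these collapse to (-1/s) y theta(alpha(a) delta(b) - delta(a) alpha(b)).
  On the other side, the compatibility of delta with the bracket makes delta^m {a,b} the Leibniz
  expansion plus m delta^(m-1) applied to the same defect alpha(a) delta(b) - delta(a) alpha(b),
  and alpha delta = delta (alpha + s) makes that defect again Leibniz for delta; so theta({a,b})
  yields the same two terms.\<close>

lemma binomial_sum_Suc_split:
  fixes f :: "nat \<Rightarrow> nat \<Rightarrow> 'a::comm_ring_1"
  shows "(\<Sum>i\<le>Suc k. of_nat (Suc k choose i) * f i (Suc k - i)) =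
    (\<Sum>i\<le>k. of_nat (k choose i) * f (Suc i) (k - i)) + (\<Sum>i\<le>k. of_nat (k choose i) * f i (Suc k - i))"
proof -
  have "(\<Sum>i\<le>Suc k. of_nat (Suc k choose i) * f i (Suc k - i)) =
     f 0 (Suc k) + (\<Sum>i\<le>k. of_nat (k choose i) * f (Suc i) (k - i))
      + (\<Sum>i\<le>k. of_nat (k choose Suc i) * f (Suc i) (k - i))"
    by (subst sum.atMost_Suc_shift) (simp del: sum.atMost_Suc add: sum.distrib algebra_simps)
  moreover have "f 0 (Suc k) + (\<Sum>i\<le>k. of_nat (k choose Suc i) * f (Suc i) (k - i))
      = (\<Sum>i\<le>Suc k. of_nat (k choose i) * f i (Suc k - i))"
    by (subst sum.atMost_Suc_shift) (simp del: sum.atMost_Suc)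
  moreover have "(\<Sum>i\<le>Suc k. of_nat (k choose i) * f i (Suc k - i))
      = (\<Sum>i\<le>k. of_nat (k choose i) * f i (Suc k - i))"
    by (simp add: binomial_eq_0)
  ultimately show ?thesis by (simp add: algebra_simps)
qed

lemma funpow_additive:
  fixes d :: "'a::plus \<Rightarrow> 'a"
  assumes "\<And>x y. d (x + y) = d x + d y"
  shows "(d ^^ k) (x + y) = (d ^^ k) x + (d ^^ k) y"
  by (induction k) (simp_all add: assms)

lemma funpow_eq_0_mono:
  fixes f :: "'a::zero \<Rightarrow> 'a"
  assumes "f 0 = 0" "(f ^^ K) x = 0" "K \<le> k"
  shows "(f ^^ k) x = 0"
proof -
  obtain j where "k = j + K" using \<open>K \<le> k\<close> by (metis add.commute le_Suc_ex)
  moreover have "(f ^^ j) 0 = 0" by (induction j) (simp_all add: assms(1))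
  ultimately show ?thesis using assms(2) by (simp add: funpow_add)
qed

lemma funpow_leibniz_with_defect:
  fixes d :: "'a::comm_ring_1 \<Rightarrow> 'a" and B C :: "'a \<Rightarrow> 'a \<Rightarrow> 'a"
  assumes add: "\<And>x y. d (x + y) = d x + d y"
    and B: "\<And>a b. d (B a b) = B (d a) b + B a (d b) + C a b"
    and C: "\<And>a b. d (C a b) = C (d a) b + C a (d b)"
  shows "(d ^^ k) (B a b) = (\<Sum>i\<le>k. of_nat (k choose i) * B ((d ^^ i) a) ((d ^^ (k - i)) b))
    + of_nat k * (d ^^ (k - 1)) (C a b)"
proof (induction k arbitrary: a b)
  case 0
  then show ?case by simp
next
  case (Suc k)
  have shift: "(d ^^ i) (d x) = (d ^^ Suc i) x" for i x
    by (simp add: funpow_Suc_right del: funpow.simps)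
  have defect: "(d ^^ (k - 1)) (C (d a) b) + (d ^^ (k - 1)) (C a (d b)) = (d ^^ k) (C a b)" if "k > 0"
    using that by (cases k) (simp_all add: funpow_additive[OF add, symmetric] C[symmetric] shift)
  have "(d ^^ Suc k) (B a b) = (d ^^ k) (B (d a) b) + (d ^^ k) (B a (d b)) + (d ^^ k) (C a b)"
    by (simp add: funpow_Suc_right B funpow_additive[OF add] del: funpow.simps)
  also have "\<dots> = (\<Sum>i\<le>k. of_nat (k choose i) * B ((d ^^ Suc i) a) ((d ^^ (k - i)) b))
     + (\<Sum>i\<le>k. of_nat (k choose i) * B ((d ^^ i) a) ((d ^^ (Suc k - i)) b))
     + of_nat (Suc k) * (d ^^ k) (C a b)"
    unfolding Suc.IH shift Suc_diff_le[symmetric]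
    using defect by (cases "k = 0") (simp_all add: Suc_diff_le algebra_simps flip: distrib_left)
  also have "\<dots> = (\<Sum>i\<le>Suc k. of_nat (Suc k choose i) * B ((d ^^ i) a) ((d ^^ (Suc k - i)) b))
     + of_nat (Suc k) * (d ^^ (Suc k - 1)) (C a b)"
    using binomial_sum_Suc_split[where f="\<lambda>i j. B ((d ^^ i) a) ((d ^^ j) b)" and k=k] by simp
  finally show ?case .
qed

lemma funpow_leibniz:
  fixes d :: "'a::comm_ring_1 \<Rightarrow> 'a" and B :: "'a \<Rightarrow> 'a \<Rightarrow> 'a"
  assumes add: "\<And>x y. d (x + y) = d x + d y"
    and B: "\<And>a b. d (B a b) = B (d a) b + B a (d b)"
  shows "(d ^^ k) (B a b) = (\<Sum>i\<le>k. of_nat (k choose i) * B ((d ^^ i) a) ((d ^^ (k - i)) b))"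
proof -
  have "d 0 = 0" using add[of 0 0] by simp
  then have "(d ^^ j) 0 = 0" for j by (induction j) simp_all
  with funpow_leibniz_with_defect[where C="\<lambda>_ _. 0", OF add] B \<open>d 0 = 0\<close> show ?thesis by simp
qed

lemma sum_square_eq_sum_diagonals:
  fixes g :: "nat \<Rightarrow> nat \<Rightarrow> 'a::comm_monoid_add"
  assumes "\<And>m n. R \<le> m \<or> R \<le> n \<Longrightarrow> g m n = 0"
  shows "(\<Sum>m<R. \<Sum>n<R. g m n) = (\<Sum>k<R + R. \<Sum>i\<le>k. g i (k - i))"
proof -
  have "(\<Sum>m<R. \<Sum>n<R. g m n) = (\<Sum>(m, n)\<in>{..<R} \<times> {..<R}. g m n)"
    by (simp add: sum.cartesian_product)
  also have "\<dots> = (\<Sum>(m, n)\<in>{(i, j). i + j < R + R}. g m n)"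
  proof (rule sum.mono_neutral_left)
    show "finite {(i, j). i + j < R + R}"
      by (rule finite_subset[of _ "{..<R + R} \<times> {..<R + R}"]) auto
  qed (auto, (meson assms not_less)+)
  also have "\<dots> = (\<Sum>k<R + R. \<Sum>i\<le>k. g i (k - i))"
    by (rule sum.triangle_reindex)
  finally show ?thesis .
qed

lemma binomial_sum_vanishes:
  fixes F :: "nat \<Rightarrow> nat \<Rightarrow> 'a::comm_ring_1"
  assumes "\<And>m n. R \<le> m \<or> R \<le> n \<Longrightarrow> F m n = 0" and "R + R \<le> Suc k"
  shows "(\<Sum>i\<le>k. of_nat (k choose i) * F i (k - i)) = 0"
proof (intro sum.neutral ballI)
  fix i assume "i \<in> {..k}"
  then have "R \<le> i \<or> R \<le> k - i" using assms(2) by auto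
  then show "of_nat (k choose i) * F i (k - i) = 0" using assms(1) by simp
qed

lemma alg_map_of_nat:
  assumes "alg_map \<phi>"
  shows "\<phi> (of_nat n) = of_nat n"
proof -
  have "\<phi> 0 = 0" using assms unfolding alg_map_def by (metis add_cancel_right_right)
  then show ?thesis using assms unfolding alg_map_def by (induction n) simp_all
qed

lemma alg_map_fls_const:
  assumes "alg_map \<phi>"
  shows "alg_map (\<lambda>c. fls_const (\<phi> c))"
  using assms unfolding alg_map_def by (simp add: fls_plus_const)

lemma alg_map_eq_neg_self_imp_0:
  fixes \<phi> :: "'k::field_char_0 \<Rightarrow> 'b::comm_ring_1" and x :: 'b
  assumes "alg_map \<phi>" and "x = - x"
  shows "x = 0"
proof -
  have "\<phi> 2 * \<phi> (1 / 2) = \<phi> (2 * (1 / 2))"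
    using assms(1) unfolding alg_map_def by metis
  then have half: "2 * \<phi> (1 / 2) = 1"
    using assms(1) alg_map_of_nat[OF assms(1), of 2] unfolding alg_map_def by simp
  have "x = \<phi> (1 / 2) * (x + x)" using half by (simp add: algebra_simps)
  also have "x + x = 0" using assms(2) by (metis add.right_inverse)
  finally show ?thesis by simp
qed

definition exp_coeff :: "('k::field_char_0 \<Rightarrow> 'b::comm_ring_1) \<Rightarrow> 'k \<Rightarrow> nat \<Rightarrow> 'b" where
  "exp_coeff \<phi> c n = \<phi> (c ^ n / fact n)"

lemma exp_coeff_0: "alg_map \<phi> \<Longrightarrow> exp_coeff \<phi> c 0 = 1"
  unfolding exp_coeff_def alg_map_def by simp

lemma exp_coeff_Suc:
  assumes "alg_map \<phi>"
  shows "of_nat (Suc n) * exp_coeff \<phi> c (Suc n) = \<phi> c * exp_coeff \<phi> c n"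
proof -
  have "of_nat (Suc n) * (c ^ Suc n / fact (Suc n)) = c * (c ^ n / fact n)"
    by (simp add: field_simps del: of_nat_Suc)
  then show ?thesis
    using assms unfolding exp_coeff_def alg_map_of_nat[OF assms, symmetric] alg_map_def by metis
qed

lemma exp_coeff_mult:
  assumes "alg_map \<phi>" and "i \<le> k"
  shows "exp_coeff \<phi> c i * exp_coeff \<phi> c (k - i) = of_nat (k choose i) * exp_coeff \<phi> c k"
proof -
  have "c ^ i / fact i * (c ^ (k - i) / fact (k - i)) = of_nat (k choose i) * (c ^ k / fact k)"
    using assms(2) by (simp add: binomial_fact field_simps flip: power_add)
  then show ?thesis
    using assms(1) unfolding exp_coeff_def alg_map_of_nat[OF assms(1), symmetric] alg_map_def by metis
qed

lemma laurent_polys_monom: "fls_const u * fls_X_inv ^ n \<in> laurent_polys"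
proof -
  have "{k. fls_nth (fls_const u * fls_X_inv ^ n) k \<noteq> 0} \<subseteq> {- int n}" by auto
  then show ?thesis unfolding laurent_polys_def by (auto intro: finite_subset)
qed

lemma laurent_polys_X: "fls_X \<in> laurent_polys"
proof -
  have "{k. fls_nth fls_X k \<noteq> 0} \<subseteq> {1}" by auto
  then show ?thesis unfolding laurent_polys_def by (auto intro: finite_subset)
qed

lemma laurent_polys_add: "f \<in> laurent_polys \<Longrightarrow> g \<in> laurent_polys \<Longrightarrow> f + g \<in> laurent_polys"
proof -
  assume "f \<in> laurent_polys" "g \<in> laurent_polys"
  moreover have "{n. fls_nth (f + g) n \<noteq> 0} \<subseteq> {n. fls_nth f n \<noteq> 0} \<union> {n. fls_nth g n \<noteq> 0}"
    by auto
  ultimately show ?thesis unfolding laurent_polys_def by (auto intro: finite_subset)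
qed

lemma laurent_polys_0: "0 \<in> laurent_polys"
  unfolding laurent_polys_def by simp

lemma laurent_polys_sum: "(\<And>i. i \<in> I \<Longrightarrow> f i \<in> laurent_polys) \<Longrightarrow> sum f I \<in> laurent_polys"
  by (induction I rule: infinite_finite_induct) (auto simp: laurent_polys_0 laurent_polys_add)

context
  fixes \<phi> :: "'k::field \<Rightarrow> 'b::comm_ring_1" and S :: "'b set" and P :: "'b \<Rightarrow> 'b \<Rightarrow> 'b"
  assumes bracket: "poisson_bracket_on \<phi> S P"
begin

lemma poisson_bracket_on_anticomm: "a \<in> S \<Longrightarrow> b \<in> S \<Longrightarrow> P a b = - P b a"
  using bracket unfolding poisson_bracket_on_def by blast

lemma poisson_bracket_on_add_left:
  "a \<in> S \<Longrightarrow> b \<in> S \<Longrightarrow> c \<in> S \<Longrightarrow> P (a + b) c = P a c + P b c"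
  using bracket unfolding poisson_bracket_on_def by blast

lemma poisson_bracket_on_scale_left: "a \<in> S \<Longrightarrow> b \<in> S \<Longrightarrow> P (\<phi> t * a) b = \<phi> t * P a b"
  using bracket unfolding poisson_bracket_on_def by blast

lemma poisson_bracket_on_scale_right:
  assumes "a \<in> S" "b \<in> S" "\<phi> t * b \<in> S"
  shows "P a (\<phi> t * b) = \<phi> t * P a b"
proof -
  have "P a (\<phi> t * b) = - (\<phi> t * P b a)"
    using assms bracket poisson_bracket_on_anticomm unfolding poisson_bracket_on_def by metis
  then show ?thesis using assms poisson_bracket_on_anticomm[of a b] by simp
qed

lemma poisson_bracket_on_leibniz:
  "a \<in> S \<Longrightarrow> b \<in> S \<Longrightarrow> c \<in> S \<Longrightarrow> P a (b * c) = P a b * c + b * P a c"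
  using bracket unfolding poisson_bracket_on_def by blast

lemma poisson_bracket_on_zero_left: "0 \<in> S \<Longrightarrow> b \<in> S \<Longrightarrow> P 0 b = 0"
  using poisson_bracket_on_add_left[of 0 0 b] by simp

lemma poisson_bracket_on_sum_left:
  assumes add_closed: "\<And>x y. x \<in> S \<Longrightarrow> y \<in> S \<Longrightarrow> x + y \<in> S" and "0 \<in> S"
    and "\<And>i. i \<in> I \<Longrightarrow> f i \<in> S" "b \<in> S"
  shows "P (\<Sum>i\<in>I. f i) b = (\<Sum>i\<in>I. P (f i) b)"
proof -
  have "P (\<Sum>i\<in>I. f i) b = (\<Sum>i\<in>I. P (f i) b) \<and> (\<Sum>i\<in>I. f i) \<in> S"
    using assms(3)
  proof (induction I rule: infinite_finite_induct)
    case (insert i I)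
    then show ?case using poisson_bracket_on_add_left[of "f i" "sum f I" b] add_closed assms(4) by simp
  qed (simp_all add: poisson_bracket_on_zero_left assms(2,4))
  then show ?thesis ..
qed

lemma poisson_bracket_on_sum_right:
  assumes add_closed: "\<And>x y. x \<in> S \<Longrightarrow> y \<in> S \<Longrightarrow> x + y \<in> S" and "0 \<in> S"
    and "\<And>i. i \<in> I \<Longrightarrow> f i \<in> S" "a \<in> S"
  shows "P a (\<Sum>i\<in>I. f i) = (\<Sum>i\<in>I. P a (f i))"
proof -
  have "(\<Sum>i\<in>I. f i) \<in> S"
    using assms(3) by (induction I rule: infinite_finite_induct) (simp_all add: add_closed assms(2))
  then have "P a (\<Sum>i\<in>I. f i) = - P (\<Sum>i\<in>I. f i) a"
    using poisson_bracket_on_anticomm assms(4) by blast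
  also have "\<dots> = - (\<Sum>i\<in>I. P (f i) a)"
    by (simp only: poisson_bracket_on_sum_left[OF assms])
  also have "\<dots> = (\<Sum>i\<in>I. P a (f i))"
    using poisson_bracket_on_anticomm[OF assms(4) assms(3)] by (simp add: sum_negf)
  finally show ?thesis .
qed

lemma poisson_bracket_on_one_right: "1 \<in> S \<Longrightarrow> a \<in> S \<Longrightarrow> P a 1 = 0"
  using poisson_bracket_on_leibniz[of a 1 1] by simp

lemma poisson_bracket_on_power_right:
  assumes "\<And>n. b ^ n \<in> S" "a \<in> S"
  shows "P a (b ^ n) = of_nat n * b ^ (n - 1) * P a b"
proof (induction n)
  case 0
  show ?case using poisson_bracket_on_one_right assms by (metis mult_zero_left of_nat_0 power_0)
next
  case (Suc n)
  have "P a (b ^ Suc n) = P a b * b ^ n + b * P a (b ^ n)"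
    using poisson_bracket_on_leibniz[of a b "b ^ n"] assms by (metis power_Suc power_one_right)
  also have "b * P a (b ^ n) = of_nat n * b ^ n * P a b"
    unfolding Suc.IH by (cases n) (simp_all add: algebra_simps)
  finally show ?case by (simp add: algebra_simps)
qed

lemma poisson_bracket_on_inverse_right:
  assumes "1 \<in> S" "a \<in> S" "b \<in> S" "c \<in> S" and inv: "b * c = 1"
  shows "P a c = - (c ^ 2 * P a b)"
proof -
  have "0 = P a (b * c)" using poisson_bracket_on_one_right assms by (simp only: inv)
  also have "\<dots> = P a b * c + b * P a c" using poisson_bracket_on_leibniz assms by blast
  finally have "0 = c * (P a b * c + b * P a c)" by simp
  also have "\<dots> = c ^ 2 * P a b + (b * c) * P a c" by (simp add: algebra_simps power2_eq_square)
  finally show ?thesis unfolding inv by (simp add: add_eq_0_iff)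
qed

end

lemma poisson_bracket_on_self:
  fixes \<phi> :: "'k::field_char_0 \<Rightarrow> 'b::comm_ring_1"
  assumes "alg_map \<phi>" "poisson_bracket_on \<phi> S P" "a \<in> S"
  shows "P a a = 0"
  using alg_map_eq_neg_self_imp_0 poisson_bracket_on_anticomm assms by metis

lemma fls_const_sum: "fls_const (\<Sum>i\<in>I. f i) = (\<Sum>i\<in>I. fls_const (f i))"
  by (induction I rule: infinite_finite_induct) (simp_all flip: fls_plus_const)

definition exp_series :: "('k::field_char_0 \<Rightarrow> 'b::comm_ring_1) \<Rightarrow> 'k \<Rightarrow> nat \<Rightarrow> (nat \<Rightarrow> 'b) \<Rightarrow> 'b fls" where
  "exp_series \<phi> c R A = (\<Sum>n<R. fls_const (exp_coeff \<phi> c n * A n) * fls_X_inv ^ n)"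

lemma exp_series_in_laurent_polys: "exp_series \<phi> c R A \<in> laurent_polys"
  unfolding exp_series_def by (intro laurent_polys_sum laurent_polys_monom)

lemma exp_series_add: "exp_series \<phi> c R (\<lambda>n. A n + B n) = exp_series \<phi> c R A + exp_series \<phi> c R B"
  unfolding exp_series_def
  by (simp add: sum.distrib distrib_left distrib_right flip: fls_plus_const)

lemma exp_series_const_mult: "exp_series \<phi> c R (\<lambda>n. u * A n) = fls_const u * exp_series \<phi> c R A"
  unfolding exp_series_def sum_distrib_left
  by (intro sum.cong refl) (simp add: algebra_simps del: fls_const_mult_const add: fls_const_mult_const[symmetric])

lemma exp_series_mult:
  "exp_series \<phi> c R A * exp_series \<phi> c R B =
    (\<Sum>m<R. \<Sum>n<R. fls_const (exp_coeff \<phi> c m * exp_coeff \<phi> c n * (A m * B n)) * fls_X_inv ^ (m + n))"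
  unfolding exp_series_def sum_product
  by (intro sum.cong refl) (simp add: power_add algebra_simps del: fls_const_mult_const add: fls_const_mult_const[symmetric])

lemma exp_series_eq_extend:
  assumes "\<And>n. R \<le> n \<Longrightarrow> A n = 0" "R \<le> R'"
  shows "exp_series \<phi> c R' A = exp_series \<phi> c R A"
  unfolding exp_series_def using assms by (intro sum.mono_neutral_right) auto

lemma exp_series_convolution:
  assumes "alg_map \<phi>" and vanish: "\<And>m n. R \<le> m \<or> R \<le> n \<Longrightarrow> F m n = 0"
  shows "(\<Sum>m<R. \<Sum>n<R. fls_const (exp_coeff \<phi> c m * exp_coeff \<phi> c n * F m n) * fls_X_inv ^ (m + n))
    = exp_series \<phi> c (R + R) (\<lambda>k. \<Sum>i\<le>k. of_nat (k choose i) * F i (k - i))"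
proof -
  have "(\<Sum>m<R. \<Sum>n<R. fls_const (exp_coeff \<phi> c m * exp_coeff \<phi> c n * F m n) * fls_X_inv ^ (m + n))
      = (\<Sum>k<R + R. \<Sum>i\<le>k. fls_const (exp_coeff \<phi> c i * exp_coeff \<phi> c (k - i) * F i (k - i)) * fls_X_inv ^ k)"
    by (subst sum_square_eq_sum_diagonals) (simp_all add: vanish)
  also have "\<dots> = exp_series \<phi> c (R + R) (\<lambda>k. \<Sum>i\<le>k. of_nat (k choose i) * F i (k - i))"
    unfolding exp_series_def sum_distrib_left fls_const_sum sum_distrib_right
    by (intro sum.cong refl) (simp add: exp_coeff_mult[OF assms(1)] algebra_simps)
  finally show ?thesis .
qed

lemma exp_series_of_nat_mult:
  assumes "alg_map \<phi>" "A R = 0"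
  shows "exp_series \<phi> c R (\<lambda>n. of_nat n * A n) = fls_const (\<phi> c) * fls_X_inv * exp_series \<phi> c R (\<lambda>n. A (Suc n))"
proof (cases R)
  case 0
  then show ?thesis by (simp add: exp_series_def)
next
  case (Suc R')
  have coeff: "exp_coeff \<phi> c (Suc n) * of_nat (Suc n) = \<phi> c * exp_coeff \<phi> c n" for n
    using exp_coeff_Suc[OF assms(1)] by (metis mult.commute)
  have "exp_series \<phi> c R (\<lambda>n. of_nat n * A n)
      = (\<Sum>n<R'. fls_const (\<phi> c * exp_coeff \<phi> c n * A (Suc n)) * fls_X_inv ^ Suc n)"
    unfolding exp_series_def Suc sum.lessThan_Suc_shift
    by (simp add: coeff mult.assoc[symmetric] del: of_nat_Suc)
  also have "\<dots> = fls_const (\<phi> c) * fls_X_inv * exp_series \<phi> c R' (\<lambda>n. A (Suc n))"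
    unfolding exp_series_def sum_distrib_left
    by (intro sum.cong refl) (simp add: algebra_simps del: fls_const_mult_const add: fls_const_mult_const[symmetric])
  also have "exp_series \<phi> c R' (\<lambda>n. A (Suc n)) = exp_series \<phi> c R (\<lambda>n. A (Suc n))"
    unfolding exp_series_def Suc using assms(2) Suc by simp
  finally show ?thesis .
qed

lemma theta_eq_exp_series:
  fixes \<delta> :: "'b::comm_ring_1 \<Rightarrow> 'b"
  assumes "\<delta> 0 = 0" "(\<delta> ^^ R) b = 0"
  shows "theta \<phi> \<delta> s b = exp_series \<phi> (- 1 / s) R (\<lambda>n. (\<delta> ^^ n) b)"
proof -
  define L where "L = (LEAST m. (\<delta> ^^ m) b = 0)"
  have "(\<delta> ^^ L) b = 0" "L \<le> R"
    unfolding L_def using assms(2) by (rule LeastI, rule Least_le)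
  then have "exp_series \<phi> (- 1 / s) R (\<lambda>n. (\<delta> ^^ n) b) = exp_series \<phi> (- 1 / s) L (\<lambda>n. (\<delta> ^^ n) b)"
    using funpow_eq_0_mono[of \<delta>, OF assms(1)] by (intro exp_series_eq_extend) auto
  then show ?thesis
    unfolding theta_def exp_series_def exp_coeff_def L_def by (simp add: field_simps)
qed

locale laurent_extension =
  fixes \<phi> :: "'k::field_char_0 \<Rightarrow> 'b::comm_ring_1"
    and P :: "'b \<Rightarrow> 'b \<Rightarrow> 'b"
    and \<alpha> \<delta> :: "'b \<Rightarrow> 'b"
    and Q :: "'b fls \<Rightarrow> 'b fls \<Rightarrow> 'b fls"
  assumes alg: "alg_map \<phi>"
    and bracket: "poisson_bracket_on (\<lambda>c. fls_const (\<phi> c)) laurent_polys Q"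
    and bracket_const: "\<And>a b. Q (fls_const a) (fls_const b) = fls_const (P a b)"
    and bracket_X_const: "\<And>b. Q fls_X (fls_const b) = fls_const (\<alpha> b) * fls_X + fls_const (\<delta> b)"
begin

lemma laurent_polys_const: "fls_const (u :: 'b) \<in> laurent_polys"
  using laurent_polys_monom[of u 0] by simp

lemma laurent_polys_X_inv_power: "(fls_X_inv :: 'b fls) ^ n \<in> laurent_polys"
  using laurent_polys_monom[of 1 n] by simp

lemma laurent_polys_X_inv: "(fls_X_inv :: 'b fls) \<in> laurent_polys"
  using laurent_polys_X_inv_power[of 1] by simp

lemma bracket_anticomm: "P a b = - P b a"
proof -
  have "fls_const (P a b) = fls_const (- P b a)"
    using poisson_bracket_on_anticomm[OF bracket laurent_polys_const[of a] laurent_polys_const[of b]]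
    unfolding bracket_const by simp
  then show ?thesis by (metis fls_const_nth)
qed

lemma bracket_zero_left: "P 0 b = 0"
  using bracket_const[of 0 b] poisson_bracket_on_zero_left[OF bracket laurent_polys_0 laurent_polys_const]
  by simp

lemma bracket_zero_right: "P a 0 = 0"
  using bracket_anticomm[of a 0] bracket_zero_left by simp

lemma bracket_const_X_inv:
  "Q (fls_const b) fls_X_inv = (fls_const (\<alpha> b) + fls_const (\<delta> b) * fls_X_inv) * fls_X_inv"
proof -
  have X_inv: "fls_X * fls_X_inv = (1 :: 'b fls)"
    by (simp add: fls_X_inv_times_conv_shift fls_X_conv_shift_1)
  have "Q (fls_const b) fls_X_inv = - (fls_X_inv ^ 2 * Q (fls_const b) fls_X)"
    using poisson_bracket_on_inverse_right[OF bracket _ laurent_polys_const laurent_polys_X laurent_polys_X_inv X_inv]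
      laurent_polys_const[of 1] by simp
  also have "Q (fls_const b) fls_X = - (fls_const (\<alpha> b) * fls_X + fls_const (\<delta> b))"
    using poisson_bracket_on_anticomm[OF bracket laurent_polys_const laurent_polys_X] bracket_X_const by simp
  also have "- (fls_X_inv ^ 2 * - (fls_const (\<alpha> b) * fls_X + fls_const (\<delta> b)))
      = fls_const (\<alpha> b) * (fls_X * fls_X_inv) * fls_X_inv + fls_const (\<delta> b) * fls_X_inv ^ 2"
    by (simp add: algebra_simps power2_eq_square)
  finally show ?thesis
    by (simp add: X_inv distrib_right power2_eq_square mult.assoc)
qed

lemma bracket_const_X_inv_power:
  "Q (fls_const b) (fls_X_inv ^ n)
    = of_nat n * (fls_const (\<alpha> b) + fls_const (\<delta> b) * fls_X_inv) * fls_X_inv ^ n"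
proof -
  have "Q (fls_const b) (fls_X_inv ^ n) = of_nat n * fls_X_inv ^ (n - 1) * Q (fls_const b) fls_X_inv"
    by (rule poisson_bracket_on_power_right[OF bracket laurent_polys_X_inv_power laurent_polys_const])
  then show ?thesis unfolding bracket_const_X_inv
    by (cases n) (simp_all add: algebra_simps)
qed

lemma bracket_X_inv_powers: "Q (fls_X_inv ^ m) (fls_X_inv ^ n) = 0"
proof -
  have "Q fls_X_inv fls_X_inv = 0"
    by (rule poisson_bracket_on_self[OF alg_map_fls_const[OF alg] bracket laurent_polys_X_inv])
  then have "Q (fls_X_inv ^ m) fls_X_inv = 0"
    using poisson_bracket_on_anticomm[OF bracket laurent_polys_X_inv_power laurent_polys_X_inv]
      poisson_bracket_on_power_right[OF bracket laurent_polys_X_inv_power laurent_polys_X_inv]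
    by simp
  then show ?thesis
    using poisson_bracket_on_power_right[OF bracket laurent_polys_X_inv_power laurent_polys_X_inv_power]
    by simp
qed

lemma bracket_monomials:
  "Q (fls_const u * fls_X_inv ^ m) (fls_const v * fls_X_inv ^ n)
    = fls_const (P u v) * fls_X_inv ^ (m + n)
    + (fls_const (\<alpha> u) + fls_const (\<delta> u) * fls_X_inv) * fls_X_inv ^ m * (of_nat n * fls_const v * fls_X_inv ^ n)
    - of_nat m * fls_const u * fls_X_inv ^ m * ((fls_const (\<alpha> v) + fls_const (\<delta> v) * fls_X_inv) * fls_X_inv ^ n)"
proof -
  define U V Y where "U = fls_const u" and "V = fls_const v" and "Y = (fls_X_inv :: 'b fls)"
  define E where "E w = fls_const (\<alpha> w) + fls_const (\<delta> w) * Y" for w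
  have lp: "U * Y ^ m \<in> laurent_polys" "U \<in> laurent_polys" "V \<in> laurent_polys"
    "Y ^ m \<in> laurent_polys" "Y ^ n \<in> laurent_polys"
    unfolding U_def V_def Y_def by (simp_all only: laurent_polys_monom laurent_polys_const laurent_polys_X_inv_power)
  note anticomm = poisson_bracket_on_anticomm[OF bracket] and leibniz = poisson_bracket_on_leibniz[OF bracket]
  have const_power: "Q (fls_const w) (Y ^ k) = of_nat k * E w * Y ^ k" for w k
    unfolding E_def Y_def by (rule bracket_const_X_inv_power)
  have "Q (U * Y ^ m) (V * Y ^ n) = Q (U * Y ^ m) V * Y ^ n + V * Q (U * Y ^ m) (Y ^ n)"
    using leibniz[OF lp(1,3,5)] .
  also have "Q (U * Y ^ m) V = - (Q V U * Y ^ m + U * Q V (Y ^ m))"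
    unfolding anticomm[OF lp(1,3)] leibniz[OF lp(3,2,4)] ..
  also have "Q (U * Y ^ m) (Y ^ n) = Q U (Y ^ n) * Y ^ m"
    unfolding anticomm[OF lp(1,5)] leibniz[OF lp(5,2,4)] anticomm[OF lp(5,2)]
    by (simp add: Y_def bracket_X_inv_powers)
  also have "Q V U = - fls_const (P u v)"
    unfolding U_def V_def bracket_const bracket_anticomm[of v u] by simp
  finally show ?thesis
    unfolding U_def[symmetric] V_def[symmetric] Y_def[symmetric] E_def[symmetric]
      const_power[of u, folded U_def] const_power[of v, folded V_def]
    by (simp add: algebra_simps power_add)
qed

lemma bracket_exp_series_bilinear:
  "Q (exp_series \<phi> c R A) (exp_series \<phi> c R B)
    = (\<Sum>m<R. \<Sum>n<R. fls_const (exp_coeff \<phi> c m * exp_coeff \<phi> c n)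
        * Q (fls_const (A m) * fls_X_inv ^ m) (fls_const (B n) * fls_X_inv ^ n))"
proof -
  define M where "M w n = fls_const w * (fls_X_inv :: 'b fls) ^ n" for w n
  define F where "F A n = fls_const (\<phi> (c ^ n / fact n)) * M (A n) n" for A :: "nat \<Rightarrow> 'b" and n
  have lp: "M w n \<in> laurent_polys" "F A n \<in> laurent_polys" for w n A
    unfolding F_def M_def by (simp_all add: laurent_polys_monom flip: mult.assoc)
  have "exp_series \<phi> c R A = (\<Sum>n<R. F A n)" for A
    unfolding exp_series_def F_def M_def exp_coeff_def by (simp flip: mult.assoc)
  then have "Q (exp_series \<phi> c R A) (exp_series \<phi> c R B) = (\<Sum>m<R. Q (F A m) (\<Sum>n<R. F B n))"
    by (simp add: poisson_bracket_on_sum_left[OF bracket laurent_polys_add laurent_polys_0]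
        lp laurent_polys_sum)
  also have "\<dots> = (\<Sum>m<R. \<Sum>n<R. Q (F A m) (F B n))"
    by (intro sum.cong refl poisson_bracket_on_sum_right[OF bracket laurent_polys_add laurent_polys_0] lp)
  also have "\<dots> = (\<Sum>m<R. \<Sum>n<R. fls_const (exp_coeff \<phi> c m * exp_coeff \<phi> c n) * Q (M (A m) m) (M (B n) n))"
  proof (intro sum.cong refl)
    fix m n
    have "Q (F A m) (F B n) = fls_const (exp_coeff \<phi> c m) * Q (M (A m) m) (F B n)"
      unfolding F_def exp_coeff_def
      by (rule poisson_bracket_on_scale_left[OF bracket lp(1) lp(2)[unfolded F_def]])
    also have "Q (M (A m) m) (F B n) = fls_const (exp_coeff \<phi> c n) * Q (M (A m) m) (M (B n) n)"
      unfolding F_def exp_coeff_def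
      by (rule poisson_bracket_on_scale_right[OF bracket lp(1) lp(1) lp(2)[unfolded F_def]])
    finally show "Q (F A m) (F B n)
        = fls_const (exp_coeff \<phi> c m * exp_coeff \<phi> c n) * Q (M (A m) m) (M (B n) n)"
      by (simp flip: mult.assoc)
  qed
  finally show ?thesis unfolding M_def .
qed

lemma bracket_exp_series:
  "Q (exp_series \<phi> c R A) (exp_series \<phi> c R B)
    = (\<Sum>m<R. \<Sum>n<R. fls_const (exp_coeff \<phi> c m * exp_coeff \<phi> c n * P (A m) (B n)) * fls_X_inv ^ (m + n))
    + (exp_series \<phi> c R (\<lambda>m. \<alpha> (A m)) + fls_X_inv * exp_series \<phi> c R (\<lambda>m. \<delta> (A m)))
      * exp_series \<phi> c R (\<lambda>n. of_nat n * B n)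
    - exp_series \<phi> c R (\<lambda>m. of_nat m * A m)
      * (exp_series \<phi> c R (\<lambda>n. \<alpha> (B n)) + fls_X_inv * exp_series \<phi> c R (\<lambda>n. \<delta> (B n)))"
  (is "_ = ?P + ?E A * ?N B - ?N A * ?E B")
proof -
  define e Y where "e = exp_coeff \<phi> c" and "Y = (fls_X_inv :: 'b fls)"
  define E where "E w = fls_const (\<alpha> w) + fls_const (\<delta> w) * Y" for w
  have E: "?E A' = (\<Sum>m<R. fls_const (e m) * (E (A' m) * Y ^ m))" for A'
    unfolding exp_series_def E_def Y_def e_def sum_distrib_left sum.distrib[symmetric]
    by (intro sum.cong refl) (simp add: algebra_simps)
  have N: "?N A' = (\<Sum>m<R. fls_const (e m) * (of_nat m * fls_const (A' m) * Y ^ m))" for A'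
    unfolding exp_series_def Y_def e_def
    by (intro sum.cong refl) (simp add: algebra_simps fls_of_nat)
  have "?P = (\<Sum>m<R. \<Sum>n<R. fls_const (e m * e n) * (fls_const (P (A m) (B n)) * Y ^ (m + n)))"
    unfolding e_def Y_def by (simp flip: mult.assoc)
  moreover have "?E A * ?N B = (\<Sum>m<R. \<Sum>n<R. fls_const (e m * e n)
      * (E (A m) * Y ^ m * (of_nat n * fls_const (B n) * Y ^ n)))"
    unfolding E N sum_product fls_const_mult_const[symmetric]
    by (intro sum.cong refl) (simp add: algebra_simps del: fls_const_mult_const)
  moreover have "?N A * ?E B = (\<Sum>m<R. \<Sum>n<R. fls_const (e m * e n)
      * (of_nat m * fls_const (A m) * Y ^ m * (E (B n) * Y ^ n)))"
    unfolding E N sum_product fls_const_mult_const[symmetric]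
    by (intro sum.cong refl) (simp add: algebra_simps del: fls_const_mult_const)
  moreover have "Q (exp_series \<phi> c R A) (exp_series \<phi> c R B)
    = (\<Sum>m<R. \<Sum>n<R. fls_const (e m * e n) * (fls_const (P (A m) (B n)) * Y ^ (m + n)
        + E (A m) * Y ^ m * (of_nat n * fls_const (B n) * Y ^ n)
        - of_nat m * fls_const (A m) * Y ^ m * (E (B n) * Y ^ n)))"
    unfolding bracket_exp_series_bilinear bracket_monomials e_def Y_def E_def ..
  ultimately show ?thesis
    by (simp add: sum.distrib sum_subtractf distrib_left right_diff_distrib)
qed

end

locale theta_setting = laurent_extension +
  fixes s
  assumes delta: "derivation \<phi> \<delta>"
    and alpha: "derivation \<phi> \<alpha>"
    and delta_bracket: "\<And>a b. \<delta> (P a b) = P (\<delta> a) b + P a (\<delta> b) + \<alpha> a * \<delta> b - \<delta> a * \<alpha> b"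
    and nilpotent: "locally_nilpotent \<delta>"
    and alpha_delta: "\<And>b. \<alpha> (\<delta> b) = \<delta> (\<alpha> b + \<phi> s * b)"
begin

abbreviation theta_coeff :: "nat \<Rightarrow> 'b" where
  "theta_coeff \<equiv> exp_coeff \<phi> (- 1 / s)"

abbreviation theta_series :: "nat \<Rightarrow> (nat \<Rightarrow> 'b) \<Rightarrow> 'b fls" where
  "theta_series \<equiv> exp_series \<phi> (- 1 / s)"

definition leibniz_defect :: "'b \<Rightarrow> 'b \<Rightarrow> 'b" where
  "leibniz_defect a b = \<alpha> a * \<delta> b - \<delta> a * \<alpha> b"

lemma delta_add: "\<delta> (a + b) = \<delta> a + \<delta> b"
  and delta_scale: "\<delta> (\<phi> t * a) = \<phi> t * \<delta> a"
  and delta_mult: "\<delta> (a * b) = \<delta> a * b + a * \<delta> b"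
  using delta unfolding derivation_def by blast+

lemma delta_zero: "\<delta> 0 = 0"
  using delta_add[of 0 0] by simp

lemma alpha_zero: "\<alpha> 0 = 0"
  using alpha unfolding derivation_def by (metis add_cancel_right_right add_0)

lemma delta_alpha: "\<delta> (\<alpha> a) = \<alpha> (\<delta> a) - \<phi> s * \<delta> a"
  using alpha_delta[of a] by (simp add: delta_add delta_scale)

lemma delta_leibniz_defect: "\<delta> (leibniz_defect a b) = leibniz_defect (\<delta> a) b + leibniz_defect a (\<delta> b)"
proof -
  have diff: "\<delta> (x - y) = \<delta> x - \<delta> y" for x y
    using delta_add[of "x - y" y] by simp
  show ?thesis
    unfolding leibniz_defect_def by (simp add: diff delta_mult delta_alpha algebra_simps)
qed

lemma funpow_delta_mult:
  "(\<delta> ^^ k) (a * b) = (\<Sum>i\<le>k. of_nat (k choose i) * ((\<delta> ^^ i) a * (\<delta> ^^ (k - i)) b))"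
  by (rule funpow_leibniz[where B = "(*)", OF delta_add delta_mult])

lemma funpow_delta_leibniz_defect:
  "(\<delta> ^^ k) (leibniz_defect a b)
    = (\<Sum>i\<le>k. of_nat (k choose i) * leibniz_defect ((\<delta> ^^ i) a) ((\<delta> ^^ (k - i)) b))"
  by (rule funpow_leibniz[where B = leibniz_defect, OF delta_add delta_leibniz_defect])

lemma funpow_delta_bracket:
  "(\<delta> ^^ k) (P a b) = (\<Sum>i\<le>k. of_nat (k choose i) * P ((\<delta> ^^ i) a) ((\<delta> ^^ (k - i)) b))
    + of_nat k * (\<delta> ^^ (k - 1)) (leibniz_defect a b)"
  by (rule funpow_leibniz_with_defect[where B = P and C = leibniz_defect, OF delta_add _ delta_leibniz_defect])
    (simp add: delta_bracket leibniz_defect_def)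

lemma funpow_delta_eq_0: "(\<delta> ^^ R) a = 0 \<Longrightarrow> R \<le> m \<Longrightarrow> (\<delta> ^^ m) a = 0"
  by (rule funpow_eq_0_mono[of \<delta>, OF delta_zero])

lemma nilpotent_pair:
  obtains R where "(\<delta> ^^ R) a = 0" "(\<delta> ^^ R) b = 0"
proof -
  obtain Ra Rb where "(\<delta> ^^ Ra) a = 0" "(\<delta> ^^ Rb) b = 0"
    using nilpotent unfolding locally_nilpotent_def by blast
  then show ?thesis
    using that funpow_delta_eq_0 by (metis max.cobounded1 max.cobounded2)
qed

lemma theta_eq_theta_series:
  "(\<delta> ^^ R) b = 0 \<Longrightarrow> theta \<phi> \<delta> s b = theta_series R (\<lambda>n. (\<delta> ^^ n) b)"
  by (rule theta_eq_exp_series[where \<delta> = \<delta>, OF delta_zero])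

lemma theta_in_laurent_polys: "theta \<phi> \<delta> s b \<in> laurent_polys"
  using nilpotent theta_eq_theta_series exp_series_in_laurent_polys
  unfolding locally_nilpotent_def by metis

lemma theta_one: "theta \<phi> \<delta> s 1 = 1"
proof -
  have "(\<delta> ^^ 1) 1 = 0" using delta_mult[of 1 1] by simp
  then show ?thesis by (simp only: theta_eq_theta_series) (simp add: exp_series_def exp_coeff_0[OF alg])
qed

lemma theta_add: "theta \<phi> \<delta> s (a + b) = theta \<phi> \<delta> s a + theta \<phi> \<delta> s b"
proof -
  obtain R where a: "(\<delta> ^^ R) a = 0" and b: "(\<delta> ^^ R) b = 0" by (rule nilpotent_pair)
  then have "(\<delta> ^^ R) (a + b) = 0" by (simp add: funpow_additive[OF delta_add])
  then show ?thesis
    by (simp add: theta_eq_theta_series[OF a] theta_eq_theta_series[OF b] theta_eq_theta_series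
        funpow_additive[OF delta_add] exp_series_add)
qed

lemma theta_scale: "theta \<phi> \<delta> s (\<phi> t * a) = fls_const (\<phi> t) * theta \<phi> \<delta> s a"
proof -
  have scale: "(\<delta> ^^ k) (\<phi> t * a) = \<phi> t * (\<delta> ^^ k) a" for k
    by (induction k) (simp_all add: delta_scale)
  obtain R where a: "(\<delta> ^^ R) a = 0" using nilpotent unfolding locally_nilpotent_def by blast
  then have "(\<delta> ^^ R) (\<phi> t * a) = 0" by (simp add: scale)
  then show ?thesis by (simp add: theta_eq_theta_series[OF a] theta_eq_theta_series scale exp_series_const_mult)
qed

lemma theta_mult: "theta \<phi> \<delta> s (a * b) = theta \<phi> \<delta> s a * theta \<phi> \<delta> s b"
proof -
  obtain R where a: "(\<delta> ^^ R) a = 0" and b: "(\<delta> ^^ R) b = 0" by (rule nilpotent_pair)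
  have vanish: "(\<delta> ^^ m) a * (\<delta> ^^ n) b = 0" if "R \<le> m \<or> R \<le> n" for m n
    using that funpow_delta_eq_0 a b by auto
  have "(\<delta> ^^ (R + R)) (a * b) = 0"
    unfolding funpow_delta_mult by (rule binomial_sum_vanishes[where R = R]) (simp_all add: vanish)
  then have "theta \<phi> \<delta> s (a * b) = theta_series (R + R) (\<lambda>k. (\<delta> ^^ k) (a * b))"
    by (rule theta_eq_theta_series)
  also have "\<dots> = theta_series (R + R)
      (\<lambda>k. \<Sum>i\<le>k. of_nat (k choose i) * ((\<delta> ^^ i) a * (\<delta> ^^ (k - i)) b))"
    unfolding funpow_delta_mult ..
  also have "\<dots> = theta_series R (\<lambda>n. (\<delta> ^^ n) a) * theta_series R (\<lambda>n. (\<delta> ^^ n) b)"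
    unfolding exp_series_mult by (rule exp_series_convolution[OF alg, symmetric]) (rule vanish)
  finally show ?thesis by (simp only: theta_eq_theta_series[OF a] theta_eq_theta_series[OF b])
qed

lemma leibniz_defect_zero: "leibniz_defect 0 b = 0" "leibniz_defect a 0 = 0"
  unfolding leibniz_defect_def by (simp_all add: alpha_zero delta_zero)

lemma theta_leibniz_defect:
  assumes a: "(\<delta> ^^ R) a = 0" and b: "(\<delta> ^^ R) b = 0"
  shows "theta \<phi> \<delta> s (leibniz_defect a b)
    = theta_series R (\<lambda>n. \<alpha> ((\<delta> ^^ n) a)) * theta_series R (\<lambda>n. \<delta> ((\<delta> ^^ n) b))
    - theta_series R (\<lambda>n. \<delta> ((\<delta> ^^ n) a)) * theta_series R (\<lambda>n. \<alpha> ((\<delta> ^^ n) b))"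
    (is "_ = ?rhs")
proof -
  have vanish: "leibniz_defect ((\<delta> ^^ m) a) ((\<delta> ^^ n) b) = 0" if "R \<le> m \<or> R \<le> n" for m n
    using that funpow_delta_eq_0 a b leibniz_defect_zero by auto
  have "(\<delta> ^^ (R + R)) (leibniz_defect a b) = 0"
    unfolding funpow_delta_leibniz_defect by (rule binomial_sum_vanishes[where R = R]) (simp_all add: vanish)
  then have "theta \<phi> \<delta> s (leibniz_defect a b)
      = theta_series (R + R) (\<lambda>k. (\<delta> ^^ k) (leibniz_defect a b))"
    by (rule theta_eq_theta_series)
  also have "\<dots> = (\<Sum>m<R. \<Sum>n<R. fls_const (theta_coeff m * theta_coeff n
      * leibniz_defect ((\<delta> ^^ m) a) ((\<delta> ^^ n) b)) * fls_X_inv ^ (m + n))"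
    unfolding funpow_delta_leibniz_defect
    by (rule exp_series_convolution[OF alg, symmetric]) (rule vanish)
  also have "\<dots> = ?rhs"
    unfolding exp_series_mult leibniz_defect_def
    by (simp add: sum_subtractf right_diff_distrib left_diff_distrib flip: fls_minus_const)
  finally show ?thesis .
qed

lemma theta_bracket_expansion:
  assumes a: "(\<delta> ^^ R) a = 0" and b: "(\<delta> ^^ R) b = 0"
  shows "theta \<phi> \<delta> s (P a b)
    = (\<Sum>m<R. \<Sum>n<R. fls_const (theta_coeff m * theta_coeff n
        * P ((\<delta> ^^ m) a) ((\<delta> ^^ n) b)) * fls_X_inv ^ (m + n))
    + fls_const (\<phi> (- 1 / s)) * fls_X_inv * theta \<phi> \<delta> s (leibniz_defect a b)"
proof -
  define W where "W = leibniz_defect a b"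
  have vanish: "P ((\<delta> ^^ m) a) ((\<delta> ^^ n) b) = 0" "leibniz_defect ((\<delta> ^^ m) a) ((\<delta> ^^ n) b) = 0"
    if "R \<le> m \<or> R \<le> n" for m n
    using that funpow_delta_eq_0 a b
    by (auto simp: bracket_zero_left bracket_zero_right leibniz_defect_zero)
  have W_top: "(\<delta> ^^ (R + R - 1)) W = 0"
    unfolding W_def funpow_delta_leibniz_defect
    by (rule binomial_sum_vanishes[where R = R]) (simp_all add: vanish)
  then have W: "(\<delta> ^^ (R + R)) W = 0"
    by (rule funpow_delta_eq_0) simp
  have "(\<Sum>i\<le>R + R. of_nat (R + R choose i) * P ((\<delta> ^^ i) a) ((\<delta> ^^ (R + R - i)) b)) = 0"
    by (rule binomial_sum_vanishes[where R = R]) (simp_all add: vanish)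
  then have "(\<delta> ^^ (R + R)) (P a b) = 0"
    unfolding funpow_delta_bracket W_def[symmetric] W_top by simp
  then have "theta \<phi> \<delta> s (P a b) = theta_series (R + R) (\<lambda>k. (\<delta> ^^ k) (P a b))"
    by (rule theta_eq_theta_series)
  also have "\<dots> = theta_series (R + R)
        (\<lambda>k. \<Sum>i\<le>k. of_nat (k choose i) * P ((\<delta> ^^ i) a) ((\<delta> ^^ (k - i)) b))
      + theta_series (R + R) (\<lambda>k. of_nat k * (\<delta> ^^ (k - 1)) W)"
    unfolding funpow_delta_bracket W_def exp_series_add ..
  also have "theta_series (R + R) (\<lambda>k. of_nat k * (\<delta> ^^ (k - 1)) W)
      = fls_const (\<phi> (- 1 / s)) * fls_X_inv * theta \<phi> \<delta> s W"
    using exp_series_of_nat_mult[OF alg, of "\<lambda>k. (\<delta> ^^ (k - 1)) W"] W_top theta_eq_theta_series[OF W]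
    by simp
  finally show ?thesis
    unfolding W_def by (simp add: exp_series_convolution[OF alg] vanish)
qed

lemma theta_bracket: "theta \<phi> \<delta> s (P a b) = Q (theta \<phi> \<delta> s a) (theta \<phi> \<delta> s b)"
proof -
  obtain R where a: "(\<delta> ^^ R) a = 0" and b: "(\<delta> ^^ R) b = 0" by (rule nilpotent_pair)
  define c where "c = fls_const (\<phi> (- 1 / s)) * fls_X_inv"
  define E where "E x = theta_series R (\<lambda>n. \<alpha> ((\<delta> ^^ n) x))" for x
  define D where "D x = theta_series R (\<lambda>n. \<delta> ((\<delta> ^^ n) x))" for x
  have euler: "theta_series R (\<lambda>n. of_nat n * (\<delta> ^^ n) x) = c * D x" if "(\<delta> ^^ R) x = 0" for x
    unfolding c_def D_def using exp_series_of_nat_mult[OF alg, of "\<lambda>n. (\<delta> ^^ n) x"] that by simp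
  have "Q (theta \<phi> \<delta> s a) (theta \<phi> \<delta> s b)
      = (\<Sum>m<R. \<Sum>n<R. fls_const (theta_coeff m * theta_coeff n
          * P ((\<delta> ^^ m) a) ((\<delta> ^^ n) b)) * fls_X_inv ^ (m + n))
        + (E a + fls_X_inv * D a) * (c * D b) - (c * D a) * (E b + fls_X_inv * D b)"
    unfolding theta_eq_theta_series[OF a] theta_eq_theta_series[OF b] bracket_exp_series euler[OF a] euler[OF b]
      E_def D_def ..
  also have "\<dots> = (\<Sum>m<R. \<Sum>n<R. fls_const (theta_coeff m * theta_coeff n
          * P ((\<delta> ^^ m) a) ((\<delta> ^^ n) b)) * fls_X_inv ^ (m + n))
        + c * (E a * D b - D a * E b)"
    by (simp add: algebra_simps)
  also have "E a * D b - D a * E b = theta \<phi> \<delta> s (leibniz_defect a b)"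
    unfolding E_def D_def theta_leibniz_defect[OF a b] ..
  finally show ?thesis
    unfolding c_def theta_bracket_expansion[OF a b] by (rule sym)
qed

end

theorem lemma3p7:
  fixes \<phi> :: "'k::field_char_0 \<Rightarrow> 'b::comm_ring_1"
    and P :: "'b \<Rightarrow> 'b \<Rightarrow> 'b"
    and \<alpha> \<delta> :: "'b \<Rightarrow> 'b"
    and s :: 'k
    and Q :: "'b fls \<Rightarrow> 'b fls \<Rightarrow> 'b fls"
  assumes alg: "alg_map \<phi>"
    and PB: "poisson_bracket_on \<phi> UNIV P"
    and alpha: "poisson_derivation \<phi> P \<alpha>"
    and delta: "derivation \<phi> \<delta>"
    and compat: "\<forall>a b. \<delta> (P a b) = P (\<delta> a) b + P a (\<delta> b) + \<alpha> a * \<delta> b - \<delta> a * \<alpha> b"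
    and lnil: "locally_nilpotent \<delta>"
    and comm: "\<forall>b. \<alpha> (\<delta> b) = \<delta> (\<alpha> b + \<phi> s * b)"
    and s: "s \<noteq> 0"
    and QB: "poisson_bracket_on (\<lambda>c. fls_const (\<phi> c)) laurent_polys Q"
    and Qext: "\<forall>a b. Q (fls_const a) (fls_const b) = fls_const (P a b)"
    and Qx: "\<forall>b. Q fls_X (fls_const b) = fls_const (\<alpha> b) * fls_X + fls_const (\<delta> b)"
  shows "poisson_hom \<phi> (\<lambda>c. fls_const (\<phi> c)) UNIV laurent_polys P Q (theta \<phi> \<delta> s)"
  \<comment> \<open>PB, the Poisson property of \<alpha> and s \<noteq> 0 are not needed once Q is given; for s = 0
    the junk value -1/0 = 0 makes \<theta> the inclusion.\<close>
proof -
  interpret theta_setting \<phi> P \<alpha> \<delta> Q s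
    using alg QB Qext Qx delta alpha compat lnil comm
    by unfold_locales (auto simp: poisson_derivation_def)
  show ?thesis
    unfolding poisson_hom_def
    using theta_in_laurent_polys theta_one theta_add theta_mult theta_scale theta_bracket by blast
qed

end
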